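(* Assume $\Phi$ and $x$ satisfy (P1)–(P4) and (P6) as in the context, let $\delta>0$, $\bar{\mathcal{K}}=\mathcal{K}_{d/2}\setminus X^{-1}(\mathcal{C}_{x,\delta/2})$, and let $r\in(0,d/2]$ and $R_{-1}<\infty$ be such that for every $(t,z_0)\in\bar{\mathcal{K}}$ one has $\bar{\mathcal{B}}_r(z_0)\subset K_d$ and $\sup_{z\in\mathcal{B}_r(z_0)}|J(t,z)^{-1}|\le R_{-1}$. Then there exist $R_3<\infty$, $w_a>0$ and, for each $(t,z_0)\in\bar{\mathcal{K}}$, a matrix $A(t,z_0)\in\mathbb{C}^{n\times n}$ whose imaginary part is symmetric and satisfies $\Im A(t,z_0)\ge w_aI$ (in the sense of quadratic forms), such that for all $(t,z_0)\in\bar{\mathcal{K}}$ and $z\in\mathcal{B}_{r/2}(z_0)$, with $y_0=x(t,z_0)$, $$\Big|\Phi(t,y_0-x(t,z),z)-\Big(\Phi(t,0,z_0)+\tfrac12(z-z_0)^TA(t,z_0)(z-z_0)\Big)\Big|\le R_3|z-z_0|^3.$$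
   Context: Fix $n\ge1$, $T>0$, compact $K_0\subset\mathbb{R}^n$, $d>0$, $\eta\in(0,\infty]$; $K_{d''}=\{z:\operatorname{dist}(z,K_0)\le d''\}$, $\mathcal{K}_{d''}=[0,T]\times K_{d''}$; $J(t,z)=D_zx(t,z)$. Hypotheses: (P1) $x\in C^\infty([0,T]\times\mathbb{R}^n;\mathbb{R}^n)$. (P2) $\Phi\in C^\infty([0,T]\times\mathbb{R}^n\times\mathbb{R}^n;\mathbb{C})$. (P3) $\nabla_y\Phi(t,0,z)$ is real and there is $C>0$ with $|\nabla_y\Phi(t,0,z)-\nabla_y\Phi(t,0,z')|+|x(t,z)-x(t,z')|\ge C|z-z'|$ for $t\in[0,T]$, $z,z'\in K_d$. (P4) There is $w_4>0$ with $\Im\Phi(t,y,z)\ge w_4|y|^2$ for $t\in[0,T]$, $z\in K_d$, $|y|\le2\eta$ (all $y$ if $\eta=\infty$). (P6) $\Phi(t,0,z)$ and $\nabla_y\Phi(t,0,z)$ are real and $J(t,z)^T\nabla_y\Phi(t,0,z)=\nabla_z[\Phi(t,0,z)]$ for all $t\in[0,T]$, $z\in\mathbb{R}^n$. Caustic set $\mathcal{C}_x=\{(t,y)\in[0,T]\times\mathbb{R}^n:\exists z\in K_d\text{ with }y=x(t,z),\ \det J(t,z)=0\}$, $\mathcal{C}_{x,\delta}=\{(t,y):\operatorname{dist}((t,y),\mathcal{C}_x)<\delta\}$; $X(t,z)=(t,x(t,z))$ and $X^{-1}(\mathcal{C}_{x,\delta'})=\{(t,z)\in\mathcal{K}_d:(t,x(t,z))\in\mathcal{C}_{x,\delta'}\}$.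 $\mathcal{B}_r(z)$ is the open ball of radius $r$ about $z$. *)

theory Defs
  imports "HOL-Analysis.Analysis"
begin

fun iter_dderiv :: "'a::real_normed_vector set \<Rightarrow> 'a list \<Rightarrow> ('a \<Rightarrow> 'b::real_normed_vector) \<Rightarrow> 'a \<Rightarrow> 'b" where
  "iter_dderiv S [] f = f"
| "iter_dderiv S (v # vs) f = (\<lambda>p. frechet_derivative (iter_dderiv S vs f) (at p within S) v)"

definition smooth_on :: "'a::real_normed_vector set \<Rightarrow> ('a \<Rightarrow> 'b::real_normed_vector) \<Rightarrow> bool" where
  "smooth_on S f \<longleftrightarrow>
     (\<forall>vs. (\<forall>p\<in>S. iter_dderiv S vs f differentiable (at p within S))
           \<and> continuous_on S (iter_dderiv S vs f))"

text \<open>K_{d''} = {z. dist(z,K0) \<le> d''} (empty if K0 is empty, i.e. dist to empty set = infinity).\<close>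
definition Kset :: "(real^'n) set \<Rightarrow> real \<Rightarrow> (real^'n) set" where
  "Kset K0 d' = {z. K0 \<noteq> {} \<and> infdist z K0 \<le> d'}"

text \<open>J(t,z) = D_z x(t,z), entry (i,j) = d x_i / d z_j.\<close>
definition Jac :: "(real \<Rightarrow> real^'n \<Rightarrow> real^'n) \<Rightarrow> real \<Rightarrow> real^'n \<Rightarrow> real^'n^'n" where
  "Jac x t z = jacobian (x t) (at z)"

definition gradY :: "(real \<Rightarrow> real^'n \<Rightarrow> real^'n \<Rightarrow> complex) \<Rightarrow> real \<Rightarrow> real^'n \<Rightarrow> real^'n \<Rightarrow> complex^'n" where
  "gradY Phi t y z = (\<chi> i. vector_derivative (\<lambda>s. Phi t (y + s *\<^sub>R axis i 1) z) (at 0))"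

definition gradZ :: "(real \<Rightarrow> real^'n \<Rightarrow> real^'n \<Rightarrow> complex) \<Rightarrow> real \<Rightarrow> real^'n \<Rightarrow> real^'n \<Rightarrow> complex^'n" where
  "gradZ Phi t y z = (\<chi> i. vector_derivative (\<lambda>s. Phi t y (z + s *\<^sub>R axis i 1)) (at 0))"

definition Re_vec :: "complex^'n \<Rightarrow> real^'n" where
  "Re_vec v = (\<chi> i. Re (v $ i))"

definition Im_mat :: "complex^'n^'n \<Rightarrow> real^'n^'n" where
  "Im_mat A = (\<chi> i j. Im (A $ i $ j))"

definition caustic :: "(real \<Rightarrow> real^'n \<Rightarrow> real^'n) \<Rightarrow> real \<Rightarrow> (real^'n) set \<Rightarrow> real \<Rightarrow> (real \<times> (real^'n)) set" where
  "caustic x T K0 d = {(t, y). t \<in> {0..T} \<and> (\<exists>z\<in>Kset K0 d. y = x t z \<and> det (Jac x t z) = 0)}"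

definition caustic_nbhd :: "(real \<Rightarrow> real^'n \<Rightarrow> real^'n) \<Rightarrow> real \<Rightarrow> (real^'n) set \<Rightarrow> real \<Rightarrow> real \<Rightarrow> (real \<times> (real^'n)) set" where
  "caustic_nbhd x T K0 d \<delta> = {p. \<exists>q\<in>caustic x T K0 d. dist p q < \<delta>}"

definition X_preimage :: "(real \<Rightarrow> real^'n \<Rightarrow> real^'n) \<Rightarrow> real \<Rightarrow> (real^'n) set \<Rightarrow> real \<Rightarrow> real \<Rightarrow> (real \<times> (real^'n)) set" where
  "X_preimage x T K0 d \<delta>' = {(t, z). t \<in> {0..T} \<and> z \<in> Kset K0 d \<and> (t, x t z) \<in> caustic_nbhd x T K0 d \<delta>'}"

definition cquad :: "real^'n \<Rightarrow> complex^'n^'n \<Rightarrow> complex" where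
  "cquad v A = (\<Sum>i\<in>UNIV. \<Sum>j\<in>UNIV. complex_of_real (v $ i) * A $ i $ j * complex_of_real (v $ j))"

end

theory Submission
  imports Defs
begin

text \<open>
  Fix \<open>(t, z0)\<close> and a unit vector \<open>u\<close>. Along the ray \<open>z = z0 + \<sigma> u\<close> the phase
  \<open>\<sigma> \<mapsto> \<Phi>(t, x(t,z0) - x(t,z0+\<sigma>u), z0+\<sigma>u)\<close> is smooth, with \<open>\<sigma>\<close>-derivatives continuous jointly in
  \<open>(t, z0, u, \<sigma>)\<close>, so its third derivative is bounded on compact sets and the cubic Taylor
  remainder is uniform. The first derivative at \<open>\<sigma> = 0\<close> is \<open>-\<nabla>\<^sub>y\<Phi> \<bullet> J u + \<nabla>\<^sub>z\<Phi> \<bullet> u\<close>, which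
  vanishes by (P6); the second is a bilinear form in \<open>u\<close>, whose symmetrisation is \<open>A\<close>.
  Positivity of \<open>Im A\<close> comes from (P4): \<open>Im \<Phi>(t, x(z0) - x(z), z) \<ge> w\<^sub>4 |x(z0) - x(z)|\<^sup>2 \<approx> w\<^sub>4 \<sigma>\<^sup>2 |J u|\<^sup>2\<close>,
  so comparing the \<open>\<sigma>\<^sup>2\<close>-coefficients gives \<open>Im u\<^sup>T A u \<ge> 2 w\<^sub>4 |J u|\<^sup>2 \<ge> 2 w\<^sub>4 |u|\<^sup>2 / R\<^sub>-\<^sub>1\<^sup>2\<close>.
\<close>

section \<open>Families of functions of one real variable, differentiable in a parameter\<close>

text \<open>
  Joint continuity of the \<open>s\<close>-derivatives in \<open>(l, s)\<close> is what makes Taylor remainders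
  uniform over compact sets of parameters.
\<close>
fun param_Ck :: "nat \<Rightarrow> 'l::topological_space set \<Rightarrow> ('l \<times> real \<Rightarrow> 'b::real_normed_vector) \<Rightarrow> bool" where
  "param_Ck 0 L \<phi> = continuous_on (L \<times> UNIV) \<phi>"
| "param_Ck (Suc k) L \<phi> = (continuous_on (L \<times> UNIV) \<phi> \<and>
     (\<exists>\<phi>'. (\<forall>l\<in>L. \<forall>s. ((\<lambda>s. \<phi> (l, s)) has_vector_derivative \<phi>' (l, s)) (at s)) \<and> param_Ck k L \<phi>'))"

lemma param_Ck_continuous_on: "param_Ck k L \<phi> \<Longrightarrow> continuous_on (L \<times> UNIV) \<phi>"
  by (cases k) auto

lemma param_Ck_SucD: "param_Ck (Suc k) L \<phi> \<Longrightarrow> param_Ck k L \<phi>"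
proof (induction k arbitrary: \<phi>)
  case (Suc k)
  then obtain \<phi>' where "\<forall>l\<in>L. \<forall>s. ((\<lambda>s. \<phi> (l, s)) has_vector_derivative \<phi>' (l, s)) (at s)"
    "param_Ck (Suc k) L \<phi>'" "continuous_on (L \<times> UNIV) \<phi>"
    by auto
  with Suc.IH show ?case by auto
qed simp

lemma param_Ck_const: "continuous_on L c \<Longrightarrow> param_Ck k L (\<lambda>p. c (fst p))"
proof (induction k arbitrary: c)
  case 0
  then show ?case by (auto intro!: continuous_on_compose2[OF 0] continuous_intros)
next
  case (Suc k)
  have "continuous_on (L \<times> UNIV) (\<lambda>p. c (fst p))"
    by (auto intro!: continuous_on_compose2[OF Suc.prems] continuous_intros)
  moreover have "param_Ck k L (\<lambda>p. (\<lambda>_. 0::'b) (fst p))"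
    by (rule Suc.IH) simp
  ultimately show ?case by (auto intro!: exI[of _ "\<lambda>_. 0"])
qed

lemma param_Ck_add: "param_Ck k L f \<Longrightarrow> param_Ck k L g \<Longrightarrow> param_Ck k L (\<lambda>p. f p + g p)"
proof (induction k arbitrary: f g)
  case 0
  then show ?case by (auto intro!: continuous_intros)
next
  case (Suc k)
  from Suc.prems obtain f' g'
    where f': "\<forall>l\<in>L. \<forall>s. ((\<lambda>s. f (l, s)) has_vector_derivative f' (l, s)) (at s)" "param_Ck k L f'"
      and g': "\<forall>l\<in>L. \<forall>s. ((\<lambda>s. g (l, s)) has_vector_derivative g' (l, s)) (at s)" "param_Ck k L g'"
      and c: "continuous_on (L \<times> UNIV) f" "continuous_on (L \<times> UNIV) g"
    by auto
  show ?case
    using f' g' c Suc.IH[OF f'(2) g'(2)]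
    by (auto intro!: exI[of _ "\<lambda>p. f' p + g' p"] continuous_intros has_vector_derivative_add)
qed

lemma param_Ck_zero: "param_Ck k L (\<lambda>p. 0)"
  using param_Ck_const[of L "\<lambda>_. 0"] by simp

lemma param_Ck_sum:
  assumes "finite I" "\<And>i. i \<in> I \<Longrightarrow> param_Ck k L (f i)"
  shows "param_Ck k L (\<lambda>p. \<Sum>i\<in>I. f i p)"
  using assms by (induction I rule: finite_induct) (auto intro: param_Ck_add param_Ck_zero)

lemma param_Ck_bounded_linear:
  assumes "bounded_linear T"
  shows "param_Ck k L f \<Longrightarrow> param_Ck k L (\<lambda>p. T (f p))"
proof (induction k arbitrary: f)
  case 0
  then show ?case using bounded_linear.continuous_on[OF assms] by auto
next
  case (Suc k)
  from Suc.prems obtain f'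
    where f': "\<forall>l\<in>L. \<forall>s. ((\<lambda>s. f (l, s)) has_vector_derivative f' (l, s)) (at s)" "param_Ck k L f'"
      and c: "continuous_on (L \<times> UNIV) f"
    by auto
  have "\<forall>l\<in>L. \<forall>s. ((\<lambda>s. T (f (l, s))) has_vector_derivative T (f' (l, s))) (at s)"
    using f'(1) bounded_linear.has_vector_derivative[OF assms] by blast
  then show ?case
    using Suc.IH[OF f'(2)] bounded_linear.continuous_on[OF assms c]
    by (auto intro!: exI[of _ "\<lambda>p. T (f' p)"])
qed

lemma param_Ck_scaleR:
  "param_Ck k L f \<Longrightarrow> param_Ck k L g \<Longrightarrow> param_Ck k L (\<lambda>p. f p *\<^sub>R g p)"
proof (induction k arbitrary: f g)
  case 0
  then show ?case by (auto intro!: continuous_intros)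
next
  case (Suc k)
  from Suc.prems obtain f' g'
    where f': "\<forall>l\<in>L. \<forall>s. ((\<lambda>s. f (l, s)) has_vector_derivative f' (l, s)) (at s)" "param_Ck k L f'"
      and g': "\<forall>l\<in>L. \<forall>s. ((\<lambda>s. g (l, s)) has_vector_derivative g' (l, s)) (at s)" "param_Ck k L g'"
      and c: "continuous_on (L \<times> UNIV) f" "continuous_on (L \<times> UNIV) g"
    by auto
  have "param_Ck k L (\<lambda>p. f p *\<^sub>R g' p + f' p *\<^sub>R g p)"
    using param_Ck_SucD[OF Suc.prems(1)] param_Ck_SucD[OF Suc.prems(2)]
    by (intro param_Ck_add Suc.IH f' g')
  then show ?case
    using f' g' c
    by (auto intro!: exI[of _ "\<lambda>p. f p *\<^sub>R g' p + f' p *\<^sub>R g p"] continuous_intros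
        has_vector_derivative_scaleR simp: has_real_derivative_iff_has_vector_derivative)
qed

lemma param_Ck_snd: "param_Ck k L snd"
proof (cases k)
  case (Suc j)
  have "param_Ck j L (\<lambda>p. (\<lambda>_. 1::real) (fst p))"
    by (rule param_Ck_const) simp
  then show ?thesis using Suc by (auto intro!: exI[of _ "\<lambda>_. 1"] continuous_intros)
qed (auto intro!: continuous_intros)

section \<open>Smooth maps along curves\<close>

lemma smooth_on_has_derivative:
  "smooth_on S G \<Longrightarrow> p \<in> S \<Longrightarrow>
    (iter_dderiv S ws G has_derivative (\<lambda>w. iter_dderiv S (w # ws) G p)) (at p within S)"
  by (simp add: smooth_on_def frechet_derivative_works)

lemma smooth_on_continuous_on_iter_dderiv: "smooth_on S G \<Longrightarrow> continuous_on S (iter_dderiv S ws G)"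
  by (simp add: smooth_on_def)

lemma iter_dderiv_Cons_expansion:
  fixes G :: "'a::euclidean_space \<Rightarrow> 'b::real_normed_vector"
  assumes "smooth_on S G" "p \<in> S"
  shows "iter_dderiv S (w # ws) G p = (\<Sum>b\<in>Basis. (w \<bullet> b) *\<^sub>R iter_dderiv S (b # ws) G p)"
proof -
  have "linear (\<lambda>w. iter_dderiv S (w # ws) G p)"
    using smooth_on_has_derivative[OF assms] has_derivative_linear by blast
  then have "iter_dderiv S ((\<Sum>b\<in>Basis. (w \<bullet> b) *\<^sub>R b) # ws) G p
      = (\<Sum>b\<in>Basis. (w \<bullet> b) *\<^sub>R iter_dderiv S (b # ws) G p)"
    by (simp add: linear_sum linear_scale)
  then show ?thesis by (simp add: euclidean_representation)
qed

lemma smooth_on_vector_derivative_comp: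
  fixes G :: "'a::euclidean_space \<Rightarrow> 'b::real_normed_vector"
  assumes "smooth_on S G" "\<forall>s. P s \<in> S" "(P has_vector_derivative P') (at s)"
  shows "((\<lambda>s. iter_dderiv S ws G (P s)) has_vector_derivative iter_dderiv S (P' # ws) G (P s)) (at s)"
proof -
  have "(iter_dderiv S ws G has_derivative (\<lambda>w. iter_dderiv S (w # ws) G (P s))) (at (P s) within range P)"
    using smooth_on_has_derivative[OF assms(1), of "P s" ws] assms(2)
    by (auto intro: has_derivative_subset)
  from vector_derivative_diff_chain_within[OF assms(3) this] show ?thesis
    by (simp add: o_def)
qed

corollary smooth_on_vector_derivative_comp_expansion:
  fixes G :: "'a::euclidean_space \<Rightarrow> 'b::real_normed_vector"
  assumes "smooth_on S G" "\<forall>s. P s \<in> S" "(P has_vector_derivative P') (at s)"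
  shows "((\<lambda>s. iter_dderiv S ws G (P s)) has_vector_derivative
           (\<Sum>b\<in>Basis. (P' \<bullet> b) *\<^sub>R iter_dderiv S (b # ws) G (P s))) (at s)"
  using smooth_on_vector_derivative_comp[OF assms] iter_dderiv_Cons_expansion[OF assms(1)] assms(2)
  by metis

lemma param_Ck_iter_dderiv_comp:
  fixes G :: "'a::euclidean_space \<Rightarrow> 'b::real_normed_vector"
  assumes G: "smooth_on S G" and PS: "\<forall>l\<in>L. \<forall>s. P (l, s) \<in> S"
  shows "param_Ck k L P \<Longrightarrow> param_Ck k L (\<lambda>p. iter_dderiv S ws G (P p))"
proof (induction k arbitrary: ws)
  case 0
  have "continuous_on (L \<times> UNIV) (iter_dderiv S ws G \<circ> P)"
    using 0 PS
    by (intro continuous_on_compose continuous_on_subset[OF smooth_on_continuous_on_iter_dderiv[OF G]]) auto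
  then show ?case by (simp add: o_def)
next
  case (Suc k)
  from Suc.prems obtain P'
    where P': "\<forall>l\<in>L. \<forall>s. ((\<lambda>s. P (l, s)) has_vector_derivative P' (l, s)) (at s)" "param_Ck k L P'"
      and c: "continuous_on (L \<times> UNIV) P"
    by auto
  have cont: "continuous_on (L \<times> UNIV) (iter_dderiv S ws G \<circ> P)"
    using c PS
    by (intro continuous_on_compose continuous_on_subset[OF smooth_on_continuous_on_iter_dderiv[OF G]]) auto
  define Q where "Q p = (\<Sum>b\<in>Basis. (P' p \<bullet> b) *\<^sub>R iter_dderiv S (b # ws) G (P p))" for p
  have "((\<lambda>s. iter_dderiv S ws G (P (l, s))) has_vector_derivative Q (l, s)) (at s)" if "l \<in> L" for l s
    unfolding Q_def using PS P'(1) that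
    by (intro smooth_on_vector_derivative_comp_expansion[OF G, of "\<lambda>s. P (l, s)"]) auto
  moreover have "param_Ck k L Q"
  proof -
    have "param_Ck k L (\<lambda>p. iter_dderiv S (b # ws) G (P p))" for b
      using Suc.IH[OF param_Ck_SucD[OF Suc.prems]] .
    then show ?thesis
      unfolding Q_def
      by (intro param_Ck_sum param_Ck_scaleR param_Ck_bounded_linear[OF bounded_linear_inner_left P'(2)]) auto
  qed
  ultimately show ?case using cont by (auto simp: o_def intro!: exI[of _ Q])
qed

section \<open>Derivatives of the phase along a ray\<close>

definition Dx :: "real \<Rightarrow> (real \<Rightarrow> real^'n \<Rightarrow> real^'n) \<Rightarrow> (real \<times> (real^'n)) list \<Rightarrow> real \<times> (real^'n) \<Rightarrow> real^'n"
  where "Dx T x ws = iter_dderiv ({0..T} \<times> UNIV) ws (\<lambda>(t, z). x t z)"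

definition DPhi :: "real \<Rightarrow> (real \<Rightarrow> real^'n \<Rightarrow> real^'n \<Rightarrow> complex) \<Rightarrow>
    (real \<times> (real^'n) \<times> (real^'n)) list \<Rightarrow> real \<times> (real^'n) \<times> (real^'n) \<Rightarrow> complex"
  where "DPhi T Phi ws = iter_dderiv ({0..T} \<times> UNIV \<times> UNIV) ws (\<lambda>(t, y, z). Phi t y z)"

definition phase_ray :: "(real \<Rightarrow> real^'n \<Rightarrow> real^'n) \<Rightarrow> (real \<Rightarrow> real^'n \<Rightarrow> real^'n \<Rightarrow> complex) \<Rightarrow>
    real \<Rightarrow> real^'n \<Rightarrow> real^'n \<Rightarrow> real \<Rightarrow> complex"
  where "phase_ray x Phi t z0 u s = Phi t (x t z0 - x t (z0 + s *\<^sub>R u)) (z0 + s *\<^sub>R u)"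

text \<open>
  \<open>curve_vel u\<close> and \<open>curve_acc u u\<close> are the velocity and acceleration at \<open>s = 0\<close> of the curve
  \<open>s \<mapsto> (t, x t z0 - x t (z0 + s *\<^sub>R u), z0 + s *\<^sub>R u)\<close> along which \<open>phase_ray\<close> evaluates \<open>Phi\<close>.
  Everything is written in coordinates, so that \<open>phase_deriv2\<close> is bilinear without any
  smoothness hypothesis.
\<close>
definition curve_vel :: "real \<Rightarrow> (real \<Rightarrow> real^'n \<Rightarrow> real^'n) \<Rightarrow> real \<Rightarrow> real^'n \<Rightarrow> real^'n \<Rightarrow>
    real \<times> (real^'n) \<times> (real^'n)"
  where "curve_vel T x t z0 u = (0, - (\<Sum>c\<in>Basis. (u \<bullet> snd c) *\<^sub>R Dx T x [c] (t, z0)), u)"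

definition curve_acc :: "real \<Rightarrow> (real \<Rightarrow> real^'n \<Rightarrow> real^'n) \<Rightarrow> real \<Rightarrow> real^'n \<Rightarrow> real^'n \<Rightarrow> real^'n \<Rightarrow>
    real \<times> (real^'n) \<times> (real^'n)"
  where "curve_acc T x t z0 u1 u2 =
    (0, - (\<Sum>c\<in>Basis. (u1 \<bullet> snd c) *\<^sub>R (\<Sum>e\<in>Basis. (u2 \<bullet> snd e) *\<^sub>R Dx T x [e, c] (t, z0))), 0)"

definition phase_deriv1 :: "real \<Rightarrow> (real \<Rightarrow> real^'n \<Rightarrow> real^'n) \<Rightarrow> (real \<Rightarrow> real^'n \<Rightarrow> real^'n \<Rightarrow> complex) \<Rightarrow>
    real \<Rightarrow> real^'n \<Rightarrow> real^'n \<Rightarrow> complex"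
  where "phase_deriv1 T x Phi t z0 u = (\<Sum>b\<in>Basis. (curve_vel T x t z0 u \<bullet> b) *\<^sub>R DPhi T Phi [b] (t, 0, z0))"

definition phase_deriv2 :: "real \<Rightarrow> (real \<Rightarrow> real^'n \<Rightarrow> real^'n) \<Rightarrow> (real \<Rightarrow> real^'n \<Rightarrow> real^'n \<Rightarrow> complex) \<Rightarrow>
    real \<Rightarrow> real^'n \<Rightarrow> real^'n \<Rightarrow> real^'n \<Rightarrow> complex"
  where "phase_deriv2 T x Phi t z0 u1 u2 =
    (\<Sum>b\<in>Basis. (curve_vel T x t z0 u1 \<bullet> b) *\<^sub>R
                   (\<Sum>c\<in>Basis. (curve_vel T x t z0 u2 \<bullet> c) *\<^sub>R DPhi T Phi [c, b] (t, 0, z0))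
               + (curve_acc T x t z0 u1 u2 \<bullet> b) *\<^sub>R DPhi T Phi [b] (t, 0, z0))"

lemma inner_zero_Pair: "(0::real, u) \<bullet> c = u \<bullet> snd c"
  by (cases c) simp

lemma Dx_ray_has_vector_derivative:
  assumes "smooth_on ({0..T} \<times> UNIV) (\<lambda>(t, z). x t z)" "t \<in> {0..T}"
  shows "((\<lambda>s. Dx T x ws (t, a + s *\<^sub>R u)) has_vector_derivative
           (\<Sum>c\<in>Basis. (u \<bullet> snd c) *\<^sub>R Dx T x (c # ws) (t, a + s *\<^sub>R u))) (at s)"
proof -
  have "((\<lambda>s. (t, a + s *\<^sub>R u)) has_vector_derivative (0, u)) (at s)"
    by (auto intro!: derivative_eq_intros)
  from smooth_on_vector_derivative_comp_expansion[OF assms(1) _ this] assms(2) show ?thesis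
    by (simp add: Dx_def inner_zero_Pair)
qed

lemma phase_ray_vector_derivatives:
  fixes x :: "real \<Rightarrow> real^'n \<Rightarrow> real^'n" and Phi :: "real \<Rightarrow> real^'n \<Rightarrow> real^'n \<Rightarrow> complex"
  assumes x: "smooth_on ({0..T} \<times> UNIV) (\<lambda>(t, z). x t z)"
    and Phi: "smooth_on ({0..T} \<times> UNIV \<times> UNIV) (\<lambda>(t, y, z). Phi t y z)"
    and t: "t \<in> {0..T}"
  shows "vector_derivative (phase_ray x Phi t a u) (at 0) = phase_deriv1 T x Phi t a u"
    and "vector_derivative (\<lambda>s. vector_derivative (phase_ray x Phi t a u) (at s)) (at 0)
           = phase_deriv2 T x Phi t a u u"
proof -
  define X1 where "X1 s = (\<Sum>c\<in>Basis. (u \<bullet> snd c) *\<^sub>R Dx T x [c] (t, a + s *\<^sub>R u))" for s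
  define X2 where "X2 s = (\<Sum>c\<in>Basis. (u \<bullet> snd c) *\<^sub>R
                            (\<Sum>e\<in>Basis. (u \<bullet> snd e) *\<^sub>R Dx T x [e, c] (t, a + s *\<^sub>R u)))" for s
  define P where "P s = (t, x t a - x t (a + s *\<^sub>R u), a + s *\<^sub>R u)" for s
  define P1 where "P1 s = (0::real, - X1 s, u)" for s
  define P2 where "P2 s = (0::real, - X2 s, 0::real^'n)" for s
  define H1 where "H1 s = (\<Sum>b\<in>Basis. (P1 s \<bullet> b) *\<^sub>R DPhi T Phi [b] (P s))" for s
  define H2 where "H2 s = (\<Sum>b\<in>Basis. (P1 s \<bullet> b) *\<^sub>R (\<Sum>c\<in>Basis. (P1 s \<bullet> c) *\<^sub>R DPhi T Phi [c, b] (P s))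
                                     + (P2 s \<bullet> b) *\<^sub>R DPhi T Phi [b] (P s))" for s
  have PS: "\<forall>s. P s \<in> {0..T} \<times> UNIV \<times> UNIV"
    using t by (simp add: P_def)
  have X1: "(X1 has_vector_derivative X2 s) (at s)" for s
    unfolding X1_def X2_def
    by (intro has_vector_derivative_sum bounded_linear.has_vector_derivative[OF bounded_linear_scaleR_right]
        Dx_ray_has_vector_derivative[OF x t, of "[_]"])
  have P: "(P has_vector_derivative P1 s) (at s)" for s
  proof -
    have "((\<lambda>s. x t (a + s *\<^sub>R u)) has_vector_derivative X1 s) (at s)"
      using Dx_ray_has_vector_derivative[OF x t, of "[]"] by (simp add: X1_def Dx_def)
    then show ?thesis
      unfolding P_def P1_def by (intro has_vector_derivative_Pair) (auto intro!: derivative_eq_intros)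
  qed
  have P1: "(P1 has_vector_derivative P2 s) (at s)" for s
    unfolding P1_def P2_def by (intro has_vector_derivative_Pair) (auto intro!: derivative_eq_intros X1)
  have DPhi_P: "((\<lambda>s. DPhi T Phi ws (P s)) has_vector_derivative
                  (\<Sum>b\<in>Basis. (P1 s \<bullet> b) *\<^sub>R DPhi T Phi (b # ws) (P s))) (at s)" for ws s
    unfolding DPhi_def by (rule smooth_on_vector_derivative_comp_expansion[OF Phi PS P])
  have P1_inner: "((\<lambda>s. P1 s \<bullet> b) has_field_derivative (P2 s \<bullet> b)) (at s)" for b s
    using bounded_linear.has_vector_derivative[OF bounded_linear_inner_left P1[of s]]
    by (simp add: has_real_derivative_iff_has_vector_derivative)
  have "(phase_ray x Phi t a u has_vector_derivative H1 s) (at s)" for s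
    using DPhi_P[of "[]" s] by (simp add: H1_def DPhi_def P_def phase_ray_def[abs_def])
  then have vd1: "vector_derivative (phase_ray x Phi t a u) (at s) = H1 s" for s
    by (rule vector_derivative_at)
  have "(H1 has_vector_derivative H2 0) (at 0)"
    unfolding H1_def H2_def
    by (intro has_vector_derivative_sum has_vector_derivative_scaleR P1_inner DPhi_P[of "[_]"])
  then have vd2: "vector_derivative (\<lambda>s. vector_derivative (phase_ray x Phi t a u) (at s)) (at 0) = H2 0"
    unfolding vd1 by (rule vector_derivative_at)
  show "vector_derivative (phase_ray x Phi t a u) (at 0) = phase_deriv1 T x Phi t a u"
    unfolding vd1 by (simp add: H1_def P1_def X1_def P_def phase_deriv1_def curve_vel_def)
  show "vector_derivative (\<lambda>s. vector_derivative (phase_ray x Phi t a u) (at s)) (at 0)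
          = phase_deriv2 T x Phi t a u u"
    unfolding vd2
    by (simp add: H2_def P1_def X1_def P2_def X2_def P_def phase_deriv2_def curve_vel_def curve_acc_def)
qed

lemma param_Ck_phase_ray:
  fixes x :: "real \<Rightarrow> real^'n \<Rightarrow> real^'n" and Phi :: "real \<Rightarrow> real^'n \<Rightarrow> real^'n \<Rightarrow> complex"
  assumes x: "smooth_on ({0..T} \<times> UNIV) (\<lambda>(t, z). x t z)"
    and Phi: "smooth_on ({0..T} \<times> UNIV \<times> UNIV) (\<lambda>(t, y, z). Phi t y z)"
  shows "param_Ck k ({0..T} \<times> UNIV \<times> UNIV) (\<lambda>((t, z0, u), s). phase_ray x Phi t z0 u s)"
proof -
  define L where "L = {0..T} \<times> (UNIV :: (real^'n) set) \<times> (UNIV :: (real^'n) set)"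
  define Q where "Q = (\<lambda>p::(real \<times> (real^'n) \<times> (real^'n)) \<times> real.
    (fst (fst p), fst (snd (fst p)) + snd p *\<^sub>R snd (snd (fst p))))"
  have "param_Ck k L (\<lambda>p. (\<lambda>l. (fst l, fst (snd l))) (fst p) + snd p *\<^sub>R (\<lambda>l. (0::real, snd (snd l))) (fst p))"
    by (intro param_Ck_add param_Ck_scaleR param_Ck_snd param_Ck_const continuous_intros)
  then have "param_Ck k L Q"
    by (simp add: Q_def)
  moreover have "\<forall>l\<in>L. \<forall>s. Q (l, s) \<in> {0..T} \<times> UNIV"
    by (auto simp: Q_def L_def)
  ultimately have x_Q: "param_Ck k L (\<lambda>p. Dx T x [] (Q p))"
    unfolding Dx_def using param_Ck_iter_dderiv_comp[OF x] by blast
  have "continuous_on L (\<lambda>l. (\<lambda>(t, z). x t z) (fst l, fst (snd l)))"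
    by (rule continuous_on_compose2[OF smooth_on_continuous_on_iter_dderiv[OF x, of "[]", simplified]])
      (auto simp: L_def intro!: continuous_intros)
  then have x_cont: "continuous_on L (\<lambda>l. (fst l, x (fst l) (fst (snd l)), fst (snd l)))"
    by (auto intro!: continuous_intros)
  define P where "P = (\<lambda>p. (\<lambda>l. (fst l, x (fst l) (fst (snd l)), fst (snd l))) (fst p)
     + (\<lambda>y. (0::real, -y, 0::real^'n)) (Dx T x [] (Q p))
     + snd p *\<^sub>R (\<lambda>l. (0::real, 0::real^'n, snd (snd l))) (fst p))"
  have "bounded_linear (\<lambda>y::real^'n. (0::real, -y, 0::real^'n))"
    by (intro bounded_linear_Pair bounded_linear_zero bounded_linear_minus bounded_linear_ident)
  from param_Ck_bounded_linear[OF this x_Q]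
  have "param_Ck k L P"
    unfolding P_def
    by (intro param_Ck_add param_Ck_scaleR param_Ck_snd param_Ck_const x_cont) (auto intro!: continuous_intros)
  moreover have "\<forall>l\<in>L. \<forall>s. P (l, s) \<in> {0..T} \<times> UNIV \<times> UNIV"
    by (auto simp: P_def L_def)
  ultimately have "param_Ck k L (\<lambda>p. DPhi T Phi [] (P p))"
    unfolding DPhi_def using param_Ck_iter_dderiv_comp[OF Phi] by blast
  moreover have "(\<lambda>p. DPhi T Phi [] (P p)) = (\<lambda>((t, z0, u), s). phase_ray x Phi t z0 u s)"
    by (simp add: DPhi_def Dx_def P_def Q_def phase_ray_def fun_eq_iff)
  ultimately show ?thesis by (simp add: L_def)
qed

section \<open>Uniform cubic Taylor bound\<close>

lemma Maclaurin_cubic_remainder_bound: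
  fixes f f1 f2 f3 :: "real \<Rightarrow> real"
  assumes "\<And>s. (f has_real_derivative f1 s) (at s)"
    and "\<And>s. (f1 has_real_derivative f2 s) (at s)"
    and "\<And>s. (f2 has_real_derivative f3 s) (at s)"
    and bound: "\<And>s. 0 \<le> s \<Longrightarrow> s \<le> \<sigma> \<Longrightarrow> \<bar>f3 s\<bar> \<le> M" and \<sigma>: "0 < \<sigma>"
  shows "\<bar>f \<sigma> - f 0 - \<sigma> * f1 0 - \<sigma>^2 / 2 * f2 0\<bar> \<le> M / 6 * \<sigma>^3"
proof -
  define diff where "diff m = (if m = 0 then f else if m = 1 then f1 else if m = 2 then f2 else f3)" for m :: nat
  have "\<forall>m t. m < 3 \<and> 0 \<le> t \<and> t \<le> \<sigma> \<longrightarrow> DERIV (diff m) t :> diff (Suc m) t"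
    using assms(1-3) by (auto simp: diff_def less_Suc_eq numeral_3_eq_3)
  from Maclaurin[OF \<sigma> _ _ this, of f] obtain t
    where t: "0 < t" "t < \<sigma>" "f \<sigma> = (\<Sum>m<3. diff m 0 / fact m * \<sigma> ^ m) + diff 3 t / fact 3 * \<sigma> ^ 3"
    by (auto simp: diff_def)
  then have "f \<sigma> = f 0 + \<sigma> * f1 0 + \<sigma>^2 / 2 * f2 0 + f3 t / 6 * \<sigma>^3"
    by (simp add: diff_def eval_nat_numeral fact_numeral algebra_simps)
  then have "\<bar>f \<sigma> - f 0 - \<sigma> * f1 0 - \<sigma>^2 / 2 * f2 0\<bar> = \<bar>f3 t / 6 * \<sigma>^3\<bar>"
    by simp
  also have "\<dots> = \<bar>f3 t\<bar> / 6 * \<sigma>^3"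
    using \<sigma> by (simp add: abs_mult)
  also have "\<dots> \<le> M / 6 * \<sigma>^3"
    using bound[of t] t \<sigma> by (intro mult_right_mono divide_right_mono) auto
  finally show ?thesis .
qed

lemma complex_Maclaurin_cubic_remainder_bound:
  fixes f f1 f2 f3 :: "real \<Rightarrow> complex"
  assumes "\<And>s. (f has_vector_derivative f1 s) (at s)"
    and "\<And>s. (f1 has_vector_derivative f2 s) (at s)"
    and "\<And>s. (f2 has_vector_derivative f3 s) (at s)"
    and bound: "\<And>s. 0 \<le> s \<Longrightarrow> s \<le> \<sigma> \<Longrightarrow> cmod (f3 s) \<le> M" and \<sigma>: "0 \<le> \<sigma>"
  shows "cmod (f \<sigma> - f 0 - \<sigma> *\<^sub>R f1 0 - (\<sigma>^2 / 2) *\<^sub>R f2 0) \<le> M / 3 * \<sigma>^3"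
proof (cases "\<sigma> = 0")
  case False
  then have \<sigma>: "0 < \<sigma>" using \<sigma> by auto
  have part: "\<bar>R (f \<sigma>) - R (f 0) - \<sigma> * R (f1 0) - \<sigma>^2 / 2 * R (f2 0)\<bar> \<le> M / 6 * \<sigma>^3"
    if R: "bounded_linear R" and R_le: "\<And>z. \<bar>R z\<bar> \<le> cmod z" for R :: "complex \<Rightarrow> real"
  proof (rule Maclaurin_cubic_remainder_bound[of "\<lambda>s. R (f s)" "\<lambda>s. R (f1 s)" "\<lambda>s. R (f2 s)" "\<lambda>s. R (f3 s)"])
    have "((\<lambda>s. R (g s)) has_real_derivative R (g' s)) (at s)"
      if "\<And>s. (g has_vector_derivative g' s) (at s)" for g g' s
      using bounded_linear.has_vector_derivative[OF R that]
      by (simp add: has_real_derivative_iff_has_vector_derivative)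
    with assms(1-3) show "((\<lambda>s. R (f s)) has_real_derivative R (f1 s)) (at s)"
      "((\<lambda>s. R (f1 s)) has_real_derivative R (f2 s)) (at s)"
      "((\<lambda>s. R (f2 s)) has_real_derivative R (f3 s)) (at s)" for s
      by blast+
    show "\<bar>R (f3 s)\<bar> \<le> M" if "0 \<le> s" "s \<le> \<sigma>" for s
      using R_le[of "f3 s"] bound[OF that] by linarith
  qed (fact \<sigma>)
  let ?E = "f \<sigma> - f 0 - \<sigma> *\<^sub>R f1 0 - (\<sigma>^2 / 2) *\<^sub>R f2 0"
  have "cmod ?E \<le> \<bar>Re ?E\<bar> + \<bar>Im ?E\<bar>"
    by (rule cmod_le)
  also have "\<dots> \<le> M / 6 * \<sigma>^3 + M / 6 * \<sigma>^3"
    using part[OF bounded_linear_Re abs_Re_le_cmod] part[OF bounded_linear_Im abs_Im_le_cmod]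
    by (intro add_mono) simp_all
  finally show ?thesis by simp
qed simp

lemma param_Ck3_uniform_cubic_Taylor:
  fixes \<phi> :: "'l::topological_space \<times> real \<Rightarrow> complex"
  assumes "param_Ck 3 L \<phi>" "compact C" "C \<subseteq> L"
  obtains M where "\<And>l \<sigma>. l \<in> C \<Longrightarrow> 0 \<le> \<sigma> \<Longrightarrow> \<sigma> \<le> \<rho> \<Longrightarrow>
      cmod (\<phi> (l, \<sigma>) - \<phi> (l, 0) - \<sigma> *\<^sub>R vector_derivative (\<lambda>s. \<phi> (l, s)) (at 0)
            - (\<sigma>^2 / 2) *\<^sub>R vector_derivative (\<lambda>s. vector_derivative (\<lambda>s. \<phi> (l, s)) (at s)) (at 0))
        \<le> M * \<sigma>^3"
proof -
  from assms(1) obtain h1 h2 h3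
    where d1: "\<forall>l\<in>L. \<forall>s. ((\<lambda>s. \<phi> (l, s)) has_vector_derivative h1 (l, s)) (at s)"
      and d2: "\<forall>l\<in>L. \<forall>s. ((\<lambda>s. h1 (l, s)) has_vector_derivative h2 (l, s)) (at s)"
      and d3: "\<forall>l\<in>L. \<forall>s. ((\<lambda>s. h2 (l, s)) has_vector_derivative h3 (l, s)) (at s)"
      and c3: "continuous_on (L \<times> UNIV) h3"
    by (auto simp: numeral_3_eq_3 dest: param_Ck_continuous_on)
  have "compact (h3 ` (C \<times> {0..\<rho>}))"
    using assms(2,3) by (intro compact_continuous_image continuous_on_subset[OF c3] compact_Times) auto
  then obtain M where M: "\<And>p. p \<in> C \<times> {0..\<rho>} \<Longrightarrow> cmod (h3 p) \<le> M"
    using compact_imp_bounded bounded_iff by (metis imageI)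
  show ?thesis
  proof (rule that[of "M / 3"])
    fix l \<sigma> assume l: "l \<in> C" and \<sigma>: "0 \<le> \<sigma>" "\<sigma> \<le> \<rho>"
    then have "l \<in> L" using assms(3) by blast
    then have vd1: "vector_derivative (\<lambda>s. \<phi> (l, s)) (at s) = h1 (l, s)" for s
      using d1 by (blast intro: vector_derivative_at)
    have vd2: "vector_derivative (\<lambda>s. h1 (l, s)) (at 0) = h2 (l, 0)"
      using d2 \<open>l \<in> L\<close> by (blast intro: vector_derivative_at)
    have "cmod (\<phi> (l, \<sigma>) - \<phi> (l, 0) - \<sigma> *\<^sub>R h1 (l, 0) - (\<sigma>^2 / 2) *\<^sub>R h2 (l, 0)) \<le> M / 3 * \<sigma>^3"
      using d1 d2 d3 \<open>l \<in> L\<close> M l \<sigma>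
      by (intro complex_Maclaurin_cubic_remainder_bound[of _ "\<lambda>s. h1 (l, s)" "\<lambda>s. h2 (l, s)" "\<lambda>s. h3 (l, s)"]) auto
    then show "cmod (\<phi> (l, \<sigma>) - \<phi> (l, 0) - \<sigma> *\<^sub>R vector_derivative (\<lambda>s. \<phi> (l, s)) (at 0)
        - (\<sigma>^2 / 2) *\<^sub>R vector_derivative (\<lambda>s. vector_derivative (\<lambda>s. \<phi> (l, s)) (at s)) (at 0)) \<le> M / 3 * \<sigma>^3"
      by (simp add: vd1 vd2)
  qed
qed

lemma phase_ray_cubic_Taylor:
  fixes x :: "real \<Rightarrow> real^'n \<Rightarrow> real^'n" and Phi :: "real \<Rightarrow> real^'n \<Rightarrow> real^'n \<Rightarrow> complex"
  assumes x: "smooth_on ({0..T} \<times> UNIV) (\<lambda>(t, z). x t z)"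
    and Phi: "smooth_on ({0..T} \<times> UNIV \<times> UNIV) (\<lambda>(t, y, z). Phi t y z)"
    and K: "compact K" "K \<subseteq> {0..T} \<times> UNIV"
  obtains M where "\<And>t z0 u \<sigma>. (t, z0) \<in> K \<Longrightarrow> norm u = 1 \<Longrightarrow> 0 \<le> \<sigma> \<Longrightarrow> \<sigma> \<le> \<rho> \<Longrightarrow>
     cmod (phase_ray x Phi t z0 u \<sigma> - Phi t 0 z0 - \<sigma> *\<^sub>R phase_deriv1 T x Phi t z0 u
           - (\<sigma>^2 / 2) *\<^sub>R phase_deriv2 T x Phi t z0 u u) \<le> M * \<sigma>^3"
proof -
  define C where "C = (\<lambda>p. (fst (fst p), snd (fst p), snd p)) ` (K \<times> sphere (0::real^'n) 1)"
  have "compact C"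
    unfolding C_def using K(1) by (intro compact_continuous_image compact_Times compact_sphere) (auto intro!: continuous_intros)
  moreover have "C \<subseteq> {0..T} \<times> UNIV \<times> UNIV"
    using K(2) by (auto simp: C_def)
  moreover define \<phi> where "\<phi> = (\<lambda>((t, z0, u), s). phase_ray x Phi t z0 u s)"
  ultimately obtain M where M: "\<And>l \<sigma>. l \<in> C \<Longrightarrow> 0 \<le> \<sigma> \<Longrightarrow> \<sigma> \<le> \<rho> \<Longrightarrow>
      cmod (\<phi> (l, \<sigma>) - \<phi> (l, 0) - \<sigma> *\<^sub>R vector_derivative (\<lambda>s. \<phi> (l, s)) (at 0)
            - (\<sigma>^2 / 2) *\<^sub>R vector_derivative (\<lambda>s. vector_derivative (\<lambda>s. \<phi> (l, s)) (at s)) (at 0))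
        \<le> M * \<sigma>^3"
    using param_Ck3_uniform_cubic_Taylor[OF param_Ck_phase_ray[OF x Phi]] by blast
  show ?thesis
  proof (rule that)
    fix t z0 and u :: "real^'n" and \<sigma> assume tz: "(t, z0) \<in> K" and u: "norm u = 1" and \<sigma>: "0 \<le> \<sigma>" "\<sigma> \<le> \<rho>"
    have "(t, z0, u) \<in> C" "t \<in> {0..T}"
      using tz u K(2) by (auto simp: C_def intro!: image_eqI[where x="((t, z0), u)"])
    with M[of "(t, z0, u)"] \<sigma> phase_ray_vector_derivatives[OF x Phi]
    show "cmod (phase_ray x Phi t z0 u \<sigma> - Phi t 0 z0 - \<sigma> *\<^sub>R phase_deriv1 T x Phi t z0 u
           - (\<sigma>^2 / 2) *\<^sub>R phase_deriv2 T x Phi t z0 u u) \<le> M * \<sigma>^3"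
      by (simp add: \<phi>_def phase_ray_def[of _ _ _ _ _ 0])
  qed
qed

lemma linear_curve_vel: "linear (curve_vel T x t z0)"
  by (rule linearI) (simp_all add: curve_vel_def inner_add_left scaleR_add_left sum.distrib scaleR_sum_right)

lemma bilinear_curve_acc: "bilinear (curve_acc T x t z0)"
  unfolding bilinear_def
  by (intro conjI allI linearI)
    (simp_all add: curve_acc_def inner_add_left scaleR_add_left scaleR_add_right sum.distrib
      scaleR_sum_right mult_ac distrib_left)

lemma bilinear_phase_deriv2: "bilinear (phase_deriv2 T x Phi t z0)"
  unfolding bilinear_def
  by (intro conjI allI linearI)
    (simp_all add: phase_deriv2_def linear_add[OF linear_curve_vel] linear_scale[OF linear_curve_vel]
      bilinear_ladd[OF bilinear_curve_acc] bilinear_radd[OF bilinear_curve_acc]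
      bilinear_lmul[OF bilinear_curve_acc] bilinear_rmul[OF bilinear_curve_acc]
      inner_add_left scaleR_add_left sum.distrib scaleR_sum_right algebra_simps)

lemma linear_axis_expansion:
  fixes f :: "real^'n \<Rightarrow> 'b::real_vector"
  assumes "linear f"
  shows "f a = (\<Sum>i\<in>UNIV. (a $ i) *\<^sub>R f (axis i 1))"
proof -
  have "f a = f (\<Sum>i\<in>UNIV. (a $ i) *\<^sub>R axis i 1)"
    using basis_expansion[of a] by (simp add: scalar_mult_eq_scaleR)
  also have "\<dots> = (\<Sum>i\<in>UNIV. (a $ i) *\<^sub>R f (axis i 1))"
    using assms by (simp add: linear_sum linear_scale)
  finally show ?thesis .
qed

lemma bilinear_axis_expansion:
  fixes B :: "real^'n \<Rightarrow> real^'n \<Rightarrow> 'b::real_vector"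
  assumes "bilinear B"
  shows "B v w = (\<Sum>i\<in>UNIV. \<Sum>j\<in>UNIV. (v $ i * w $ j) *\<^sub>R B (axis i 1) (axis j 1))"
proof -
  have "B v w = B (\<Sum>i\<in>UNIV. (v $ i) *\<^sub>R axis i 1) (\<Sum>j\<in>UNIV. (w $ j) *\<^sub>R axis j 1)"
    using basis_expansion[of v] basis_expansion[of w] by (simp add: scalar_mult_eq_scaleR)
  also have "\<dots> = (\<Sum>(i, j)\<in>UNIV \<times> UNIV. B ((v $ i) *\<^sub>R axis i 1) ((w $ j) *\<^sub>R axis j 1))"
    by (rule bilinear_sum[OF assms])
  also have "\<dots> = (\<Sum>i\<in>UNIV. \<Sum>j\<in>UNIV. (v $ i * w $ j) *\<^sub>R B (axis i 1) (axis j 1))"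
    by (simp add: bilinear_lmul[OF assms] bilinear_rmul[OF assms] sum.cartesian_product mult.commute)
  finally show ?thesis .
qed

definition sym_form_matrix :: "(real^'n \<Rightarrow> real^'n \<Rightarrow> complex) \<Rightarrow> complex^'n^'n"
  where "sym_form_matrix B = (\<chi> i j. (B (axis i 1) (axis j 1) + B (axis j 1) (axis i 1)) / 2)"

lemma cquad_sym_form_matrix:
  fixes B :: "real^'n \<Rightarrow> real^'n \<Rightarrow> complex"
  assumes "bilinear B"
  shows "cquad v (sym_form_matrix B) = B v v"
proof -
  have "cquad v (sym_form_matrix B)
     = (\<Sum>i\<in>UNIV. \<Sum>j\<in>UNIV. (v $ i * v $ j) *\<^sub>R B (axis i 1) (axis j 1)) / 2
       + (\<Sum>i\<in>UNIV. \<Sum>j\<in>UNIV. (v $ i * v $ j) *\<^sub>R B (axis j 1) (axis i 1)) / 2"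
    by (simp add: cquad_def sym_form_matrix_def scaleR_conv_of_real sum_divide_distrib
        sum.distrib[symmetric] algebra_simps add_divide_distrib)
  also have "(\<Sum>i\<in>UNIV. \<Sum>j\<in>UNIV. (v $ i * v $ j) *\<^sub>R B (axis j 1) (axis i 1))
      = (\<Sum>i\<in>UNIV. \<Sum>j\<in>UNIV. (v $ i * v $ j) *\<^sub>R B (axis i 1) (axis j 1))"
    by (subst sum.swap) (simp add: mult.commute)
  finally show ?thesis
    using bilinear_axis_expansion[OF assms, of v v] by simp
qed

lemma symmetric_Im_mat_sym_form_matrix:
  "transpose (Im_mat (sym_form_matrix B)) = Im_mat (sym_form_matrix B)"
  by (simp add: Im_mat_def sym_form_matrix_def transpose_def vec_eq_iff add.commute)

lemma Im_cquad: "Im (cquad v A) = v \<bullet> (Im_mat A *v v)"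
  by (simp add: cquad_def Im_mat_def inner_vec_def matrix_vector_mult_def Im_sum sum_distrib_left mult_ac)

lemma cquad_scaleR: "cquad (s *\<^sub>R v) A = of_real (s^2) * cquad v A"
  by (simp add: cquad_def sum_distrib_left power2_eq_square mult_ac)

section \<open>Cubic expansion of the phase\<close>

lemma x_has_derivative_Dx:
  assumes x: "smooth_on ({0..T} \<times> UNIV) (\<lambda>(t, z). x t z)" and t: "t \<in> {0..T}"
  shows "(x t has_derivative (\<lambda>w. Dx T x [(0, w)] (t, z0))) (at z0)"
proof -
  have "((\<lambda>(t, z). x t z) has_derivative (\<lambda>w. Dx T x [w] (t, z0))) (at (t, z0) within range (Pair t))"
    using smooth_on_has_derivative[OF x, of "(t, z0)" "[]"] t
    by (auto simp: Dx_def intro: has_derivative_subset)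
  from diff_chain_within[OF has_derivative_Pair[OF has_derivative_const has_derivative_ident] this]
  show ?thesis by (simp add: o_def)
qed

lemma Jac_has_derivative:
  assumes "smooth_on ({0..T} \<times> UNIV) (\<lambda>(t, z). x t z)" "t \<in> {0..T}"
  shows "(x t has_derivative (\<lambda>h. Jac x t z0 *v h)) (at z0)"
proof -
  have "x t differentiable (at z0)"
    using x_has_derivative_Dx[OF assms] by (auto simp: differentiable_def)
  then show ?thesis by (simp add: jacobian_works Jac_def)
qed

lemma Jac_mult_eq_Dx:
  assumes "smooth_on ({0..T} \<times> UNIV) (\<lambda>(t, z). x t z)" "t \<in> {0..T}"
  shows "Jac x t z0 *v u = Dx T x [(0, u)] (t, z0)"
  using has_derivative_unique[OF Jac_has_derivative[OF assms] x_has_derivative_Dx[OF assms]]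
  by (simp add: fun_eq_iff)

lemma Phi_has_vector_derivative_DPhi:
  assumes Phi: "smooth_on ({0..T} \<times> UNIV \<times> UNIV) (\<lambda>(t, y, z). Phi t y z)" and t: "t \<in> {0..T}"
  shows "((\<lambda>s. Phi t (y + s *\<^sub>R v) (z + s *\<^sub>R w)) has_vector_derivative DPhi T Phi [(0, v, w)] (t, y, z)) (at 0)"
proof -
  have "((\<lambda>s. (t, y + s *\<^sub>R v, z + s *\<^sub>R w)) has_vector_derivative (0, v, w)) (at 0)"
    by (auto intro!: derivative_eq_intros)
  from smooth_on_vector_derivative_comp[OF Phi _ this, of "[]"] t show ?thesis
    by (simp add: DPhi_def)
qed

lemma gradY_eq_DPhi:
  assumes "smooth_on ({0..T} \<times> UNIV \<times> UNIV) (\<lambda>(t, y, z). Phi t y z)" "t \<in> {0..T}"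
  shows "gradY Phi t y z $ i = DPhi T Phi [(0, axis i 1, 0)] (t, y, z)"
  using Phi_has_vector_derivative_DPhi[OF assms, of y "axis i 1" z 0]
  by (simp add: gradY_def vector_derivative_at)

lemma gradZ_eq_DPhi:
  assumes "smooth_on ({0..T} \<times> UNIV \<times> UNIV) (\<lambda>(t, y, z). Phi t y z)" "t \<in> {0..T}"
  shows "gradZ Phi t y z $ i = DPhi T Phi [(0, 0, axis i 1)] (t, y, z)"
  using Phi_has_vector_derivative_DPhi[OF assms, of y 0 z "axis i 1"]
  by (simp add: gradZ_def vector_derivative_at)

lemma DPhi_eq_grad_sum:
  assumes Phi: "smooth_on ({0..T} \<times> UNIV \<times> UNIV) (\<lambda>(t, y, z). Phi t y z)" and t: "t \<in> {0..T}"
  shows "DPhi T Phi [(0, a, b)] (t, y, z) =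
           (\<Sum>i\<in>UNIV. of_real (a $ i) * gradY Phi t y z $ i) + (\<Sum>i\<in>UNIV. of_real (b $ i) * gradZ Phi t y z $ i)"
proof -
  define dF where "dF = (\<lambda>w. DPhi T Phi [w] (t, y, z))"
  have "(t, y, z) \<in> {0..T} \<times> UNIV \<times> UNIV"
    using t by simp
  from has_derivative_linear[OF smooth_on_has_derivative[OF Phi this, of "[]"]]
  have lin: "linear dF"
    by (simp add: dF_def DPhi_def)
  then have "linear (\<lambda>a. dF (0, a, 0))" "linear (\<lambda>b. dF (0, 0, b))"
    by (auto intro!: linearI simp: linear_add[OF lin, symmetric] linear_scale[OF lin, symmetric])
  from linear_axis_expansion[OF this(1), of a] linear_axis_expansion[OF this(2), of b]
    linear_add[OF lin, of "(0, a, 0)" "(0, 0, b)"]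
  have "dF (0, a, b) = (\<Sum>i\<in>UNIV. (a $ i) *\<^sub>R dF (0, axis i 1, 0)) + (\<Sum>i\<in>UNIV. (b $ i) *\<^sub>R dF (0, 0, axis i 1))"
    by simp
  then show ?thesis
    by (simp add: dF_def gradY_eq_DPhi[OF Phi t] gradZ_eq_DPhi[OF Phi t] scaleR_conv_of_real)
qed

lemma Im_gradZ_eq_0:
  assumes Phi: "smooth_on ({0..T} \<times> UNIV \<times> UNIV) (\<lambda>(t, y, z). Phi t y z)" and t: "t \<in> {0..T}"
    and real: "\<And>z. Im (Phi t y z) = 0"
  shows "Im (gradZ Phi t y z $ i) = 0"
proof -
  have "((\<lambda>s. Im (Phi t (y + s *\<^sub>R 0) (z + s *\<^sub>R axis i 1))) has_real_derivative Im (gradZ Phi t y z $ i)) (at 0)"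
    using bounded_linear.has_vector_derivative[OF bounded_linear_Im
        Phi_has_vector_derivative_DPhi[OF Phi t, of y 0 z "axis i 1"]]
    by (simp add: gradZ_eq_DPhi[OF Phi t] has_real_derivative_iff_has_vector_derivative)
  then have "((\<lambda>s. 0) has_real_derivative Im (gradZ Phi t y z $ i)) (at 0)"
    by (simp add: real)
  then show ?thesis
    using DERIV_const DERIV_unique by blast
qed

lemma sum_of_real_mult_real_vec:
  "(\<And>i. Im (g $ i) = 0) \<Longrightarrow> (\<Sum>i\<in>UNIV. of_real (a $ i) * g $ i) = of_real (a \<bullet> Re_vec g)"
  by (simp add: complex_eq_iff Re_sum Im_sum inner_vec_def Re_vec_def)

text \<open>
  Hypothesis (P6) is the statement \<open>D\<^sub>z[\<Phi>(t,0,z)] = J\<^sup>T \<nabla>\<^sub>y\<Phi>(t,0,z)\<close>, so the \<open>y\<close>- and \<open>z\<close>-parts of the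
  first derivative of \<open>phase_ray\<close>, \<open>-\<nabla>\<^sub>y\<Phi> \<bullet> J u\<close> and \<open>\<nabla>\<^sub>z\<Phi> \<bullet> u\<close>, cancel.
\<close>
lemma phase_deriv1_eq_0:
  fixes x :: "real \<Rightarrow> real^'n \<Rightarrow> real^'n" and Phi :: "real \<Rightarrow> real^'n \<Rightarrow> real^'n \<Rightarrow> complex"
  assumes x: "smooth_on ({0..T} \<times> UNIV) (\<lambda>(t, z). x t z)"
    and Phi: "smooth_on ({0..T} \<times> UNIV \<times> UNIV) (\<lambda>(t, y, z). Phi t y z)"
    and P6: "\<forall>t\<in>{0..T}. \<forall>z. Im (Phi t 0 z) = 0 \<and> (\<forall>i. Im (gradY Phi t 0 z $ i) = 0) \<and>
              transpose (Jac x t z) *v Re_vec (gradY Phi t 0 z) = Re_vec (gradZ Phi t 0 z)"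
    and t: "t \<in> {0..T}"
  shows "phase_deriv1 T x Phi t z0 u = 0"
proof -
  let ?gY = "Re_vec (gradY Phi t 0 z0)" and ?gZ = "Re_vec (gradZ Phi t 0 z0)"
  have "curve_vel T x t z0 u = (0, - (Jac x t z0 *v u), u)"
    using iter_dderiv_Cons_expansion[OF x, of "(t, z0)" "(0, u)" "[]"] t Jac_mult_eq_Dx[OF x t]
    by (simp add: curve_vel_def Dx_def inner_zero_Pair)
  moreover have "phase_deriv1 T x Phi t z0 u = DPhi T Phi [curve_vel T x t z0 u] (t, 0, z0)"
    using iter_dderiv_Cons_expansion[OF Phi, of "(t, 0, z0)" "curve_vel T x t z0 u" "[]"] t
    by (simp add: phase_deriv1_def DPhi_def)
  moreover have "Im (gradY Phi t 0 z0 $ i) = 0" "Im (gradZ Phi t 0 z0 $ i) = 0" for i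
    using P6 t Im_gradZ_eq_0[OF Phi t] by auto
  ultimately have "phase_deriv1 T x Phi t z0 u = of_real ((- (Jac x t z0 *v u)) \<bullet> ?gY) + of_real (u \<bullet> ?gZ)"
    by (simp only: DPhi_eq_grad_sum[OF Phi t] sum_of_real_mult_real_vec)
  also have "(- (Jac x t z0 *v u)) \<bullet> ?gY = - ((?gY v* Jac x t z0) \<bullet> u)"
    by (metis dot_lmul_matrix inner_commute inner_minus_left)
  finally show ?thesis
    using P6 t by (simp add: inner_commute)
qed

lemma phase_cubic_expansion:
  fixes x :: "real \<Rightarrow> real^'n \<Rightarrow> real^'n" and Phi :: "real \<Rightarrow> real^'n \<Rightarrow> real^'n \<Rightarrow> complex"
  assumes x: "smooth_on ({0..T} \<times> UNIV) (\<lambda>(t, z). x t z)"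
    and Phi: "smooth_on ({0..T} \<times> UNIV \<times> UNIV) (\<lambda>(t, y, z). Phi t y z)"
    and P6: "\<forall>t\<in>{0..T}. \<forall>z. Im (Phi t 0 z) = 0 \<and> (\<forall>i. Im (gradY Phi t 0 z $ i) = 0) \<and>
              transpose (Jac x t z) *v Re_vec (gradY Phi t 0 z) = Re_vec (gradZ Phi t 0 z)"
    and K: "compact K" "K \<subseteq> {0..T} \<times> UNIV"
  obtains M where "\<And>t z0 z. (t, z0) \<in> K \<Longrightarrow> z \<in> ball z0 \<rho> \<Longrightarrow>
    cmod (Phi t (x t z0 - x t z) z - (Phi t 0 z0 + 1/2 * cquad (z - z0) (sym_form_matrix (phase_deriv2 T x Phi t z0))))
      \<le> M * (norm (z - z0))^3"
proof -
  obtain M where M: "\<And>t z0 u \<sigma>. (t, z0) \<in> K \<Longrightarrow> norm u = 1 \<Longrightarrow> 0 \<le> \<sigma> \<Longrightarrow> \<sigma> \<le> \<rho> \<Longrightarrow>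
     cmod (phase_ray x Phi t z0 u \<sigma> - Phi t 0 z0 - \<sigma> *\<^sub>R phase_deriv1 T x Phi t z0 u
           - (\<sigma>^2 / 2) *\<^sub>R phase_deriv2 T x Phi t z0 u u) \<le> M * \<sigma>^3"
    using phase_ray_cubic_Taylor[OF x Phi K] by blast
  show ?thesis
  proof (rule that)
    fix t z0 z assume tz: "(t, z0) \<in> K" and z: "z \<in> ball z0 \<rho>"
    show "cmod (Phi t (x t z0 - x t z) z - (Phi t 0 z0 + 1/2 * cquad (z - z0) (sym_form_matrix (phase_deriv2 T x Phi t z0))))
      \<le> M * (norm (z - z0))^3"
    proof (cases "z = z0")
      case False
      define \<sigma> where "\<sigma> = norm (z - z0)"
      define u where "u = (1 / \<sigma>) *\<^sub>R (z - z0)"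
      have \<sigma>: "\<sigma> > 0" "\<sigma> \<le> \<rho>" and u: "norm u = 1" and zu: "z = z0 + \<sigma> *\<^sub>R u"
        using False z by (auto simp: \<sigma>_def u_def dist_norm norm_minus_commute)
      have "t \<in> {0..T}"
        using tz K(2) by auto
      then have d1: "phase_deriv1 T x Phi t z0 u = 0"
        by (rule phase_deriv1_eq_0[OF x Phi P6])
      have "cquad (z - z0) (sym_form_matrix (phase_deriv2 T x Phi t z0))
          = of_real (\<sigma>^2) * phase_deriv2 T x Phi t z0 u u"
        by (simp add: zu cquad_sym_form_matrix[OF bilinear_phase_deriv2] bilinear_lmul[OF bilinear_phase_deriv2]
            bilinear_rmul[OF bilinear_phase_deriv2])
          (simp add: scaleR_conv_of_real power2_eq_square)
      then have d2: "(\<sigma>^2 / 2) *\<^sub>R phase_deriv2 T x Phi t z0 u u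
          = 1/2 * cquad (z - z0) (sym_form_matrix (phase_deriv2 T x Phi t z0))"
        by (simp add: scaleR_conv_of_real)
      have ray: "phase_ray x Phi t z0 u \<sigma> = Phi t (x t z0 - x t z) z"
        by (simp add: phase_ray_def zu)
      show ?thesis
        using M[OF tz u less_imp_le[OF \<sigma>(1)] \<sigma>(2)]
        unfolding d1 d2 ray \<sigma>_def[symmetric] by (simp add: diff_diff_eq)
    qed (simp add: cquad_def)
  qed
qed

section \<open>Positivity of the imaginary part\<close>

lemma has_vector_derivative_along_ray:
  assumes "(X has_derivative X') (at z0)"
  shows "((\<lambda>s. X (z0 + s *\<^sub>R v)) has_vector_derivative X' v) (at 0)"
proof -
  have "((\<lambda>s. z0 + s *\<^sub>R v) has_vector_derivative v) (at 0)"
    by (auto intro!: derivative_eq_intros)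
  moreover have "(X has_derivative X') (at (z0 + 0 *\<^sub>R v) within range (\<lambda>s. z0 + s *\<^sub>R v))"
    using assms by (auto intro: has_derivative_subset)
  ultimately have "(X \<circ> (\<lambda>s. z0 + s *\<^sub>R v) has_vector_derivative X' v) (at 0)"
    by (rule vector_derivative_diff_chain_within)
  then show ?thesis by (simp add: o_def)
qed

lemma difference_quotient_tendsto:
  fixes f :: "real \<Rightarrow> 'a::real_normed_vector"
  assumes "(f has_vector_derivative f') (at 0)"
  shows "((\<lambda>s. (1 / s) *\<^sub>R (f s - f 0)) \<longlongrightarrow> f') (at 0)"
proof -
  have "((\<lambda>h. norm (f (0 + h) - f 0 - h *\<^sub>R f') / norm h) \<longlongrightarrow> 0) (at 0)"
    using assms unfolding has_vector_derivative_def has_derivative_at by blast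
  moreover have "\<forall>\<^sub>F h in at 0. norm (f (0 + h) - f 0 - h *\<^sub>R f') / norm h = norm ((1 / h) *\<^sub>R (f h - f 0) - f')"
  proof (rule eventually_at_topological[THEN iffD2], intro exI[of _ UNIV] conjI ballI impI)
    fix h :: real
    assume "h \<noteq> 0"
    then have "(1 / h) *\<^sub>R (f h - f 0) - f' = (1 / h) *\<^sub>R (f h - f 0 - h *\<^sub>R f')"
      by (simp add: algebra_simps)
    then show "norm (f (0 + h) - f 0 - h *\<^sub>R f') / norm h = norm ((1 / h) *\<^sub>R (f h - f 0) - f')"
      by (simp add: divide_inverse mult.commute)
  qed auto
  ultimately have "((\<lambda>h. (1 / h) *\<^sub>R (f h - f 0) - f') \<longlongrightarrow> 0) (at 0)"
    using tendsto_cong tendsto_norm_zero_cancel by fastforce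
  from tendsto_add[OF this tendsto_const[of f']] show ?thesis by simp
qed

text \<open>
  Along \<open>z = z0 + s v\<close> the lower bound gives \<open>w |X z0 - X z|\<^sup>2 \<le> (s\<^sup>2/2) Im (v\<^sup>T A v) + O(s\<^sup>3)\<close>;
  divide by \<open>s\<^sup>2\<close> and let \<open>s \<rightarrow> 0+\<close>.
\<close>
lemma Im_cquad_ge_of_cubic_expansion:
  fixes X :: "real^'n \<Rightarrow> 'a::real_normed_vector" and F :: "'a \<Rightarrow> real^'n \<Rightarrow> complex"
  assumes X: "(X has_derivative X') (at z0)" and \<rho>: "\<rho> > 0" and \<epsilon>: "\<epsilon> > 0"
    and lower: "\<And>y z. z \<in> ball z0 \<rho> \<Longrightarrow> norm y < \<epsilon> \<Longrightarrow> w * (norm y)^2 \<le> Im (F y z)"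
    and F0: "Im (F 0 z0) = 0"
    and cubic: "\<And>z. z \<in> ball z0 \<rho> \<Longrightarrow>
                  cmod (F (X z0 - X z) z - (F 0 z0 + 1/2 * cquad (z - z0) A)) \<le> R * (norm (z - z0))^3"
  shows "2 * w * (norm (X' v))^2 \<le> Im (cquad v A)"
proof -
  define I where "I = Im (cquad v A)"
  define f where "f s = X (z0 + s *\<^sub>R v)" for s :: real
  define q where "q s = (1 / s) *\<^sub>R (f s - f 0)" for s
  have fd: "(f has_vector_derivative X' v) (at 0)"
    unfolding f_def[abs_def] by (rule has_vector_derivative_along_ray[OF X])
  have f_cont: "(f \<longlongrightarrow> f 0) (at_right 0)"
    using has_vector_derivative_continuous[OF fd] unfolding isCont_def
    by (rule tendsto_mono[OF at_le, rotated]) simp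
  have q_lim: "(q \<longlongrightarrow> X' v) (at_right 0)"
    using difference_quotient_tendsto[OF fd] unfolding q_def[abs_def]
    by (rule tendsto_mono[OF at_le, rotated]) simp
  define G where "G s = w * (norm (q s))^2 - R * s * (norm v)^3" for s
  have "(G \<longlongrightarrow> w * (norm (X' v))^2 - R * 0 * (norm v)^3) (at_right 0)"
    unfolding G_def[abs_def] by (intro tendsto_intros q_lim tendsto_ident_at)
  moreover have "((\<lambda>s. s * norm v) \<longlongrightarrow> 0) (at_right (0::real))"
    by (intro tendsto_eq_intros) auto
  then have "\<forall>\<^sub>F s in at_right 0. s * norm v < \<rho>"
    using \<rho> by (rule order_tendstoD)
  then have "\<forall>\<^sub>F s in at_right 0. G s \<le> I / 2"
    using tendstoD[OF f_cont \<epsilon>] eventually_at_right_less[of 0]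
  proof eventually_elim
    case (elim s)
    then have s: "0 < s" "s * norm v < \<rho>" and fs: "norm (f s - f 0) < \<epsilon>"
      by (auto simp: dist_norm)
    define z where "z = z0 + s *\<^sub>R v"
    have z: "z \<in> ball z0 \<rho>"
      using s by (simp add: z_def dist_norm)
    have y: "norm (X z0 - X z) = s * norm (q s)"
      using s by (simp add: q_def f_def z_def norm_minus_commute)
    have "Im (F (X z0 - X z) z) - s^2 * (I / 2) \<le> R * (s * norm v)^3"
      using abs_Im_le_cmod[of "F (X z0 - X z) z - (F 0 z0 + 1/2 * cquad (z - z0) A)"] cubic[OF z] s(1) F0
      by (simp add: z_def cquad_scaleR I_def)
    moreover have "norm (X z0 - X z) < \<epsilon>"
      using fs by (simp add: f_def z_def norm_minus_commute)
    then have "w * (norm (X z0 - X z))^2 \<le> Im (F (X z0 - X z) z)"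
      by (rule lower[OF z])
    ultimately have "s^2 * (G s - I / 2) \<le> 0"
      unfolding y by (simp add: G_def algebra_simps power2_eq_square power3_eq_cube)
    then show "G s \<le> I / 2"
      using s by (simp add: mult_le_0_iff)
  qed
  ultimately show ?thesis
    using tendsto_upperbound by (fastforce simp: I_def)
qed

lemma matrix_inv_mult_left: "invertible A \<Longrightarrow> matrix_inv A ** A = mat 1"
  unfolding invertible_def matrix_inv_def by (rule someI2_ex) auto

lemma norm_le_onorm_matrix_inv_mult:
  fixes J :: "real^'n^'m"
  assumes "invertible J"
  shows "norm v \<le> onorm (\<lambda>w. matrix_inv J *v w) * norm (J *v v)"
proof -
  have "v = matrix_inv J *v (J *v v)"
    by (simp add: matrix_vector_mul_assoc matrix_inv_mult_left[OF assms])
  then show ?thesis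
    using onorm[OF matrix_vector_mul_bounded_linear, of "matrix_inv J" "J *v v"] by simp
qed

lemma Im_mat_ge_of_phase_expansion:
  fixes x :: "real \<Rightarrow> real^'n \<Rightarrow> real^'n" and Phi :: "real \<Rightarrow> real^'n \<Rightarrow> real^'n \<Rightarrow> complex"
    and eta :: ereal
  assumes x: "smooth_on ({0..T} \<times> UNIV) (\<lambda>(t, z). x t z)" and t: "t \<in> {0..T}"
    and w: "0 \<le> w" and eta: "eta > 0" and r: "r > 0"
    and lower: "\<And>y z. z \<in> cball z0 r \<Longrightarrow> ereal (norm y) \<le> 2 * eta \<Longrightarrow> w * (norm y)^2 \<le> Im (Phi t y z)"
    and Im0: "Im (Phi t 0 z0) = 0"
    and cubic: "\<And>z. z \<in> ball z0 (r/2) \<Longrightarrow>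
                  cmod (Phi t (x t z0 - x t z) z - (Phi t 0 z0 + 1/2 * cquad (z - z0) A)) \<le> R * (norm (z - z0))^3"
    and inv: "invertible (Jac x t z0)" and Rm1: "onorm (\<lambda>v. matrix_inv (Jac x t z0) *v v) \<le> Rm1"
  shows "2 * w / (max Rm1 1)^2 * (norm v)^2 \<le> v \<bullet> (Im_mat A *v v)"
proof -
  obtain \<epsilon> :: real where \<epsilon>: "\<epsilon> > 0" "ereal \<epsilon> \<le> 2 * eta"
    using eta by (cases eta) (auto intro: that[of 1] that[of "2 * real_of_ereal eta"])
  have "2 * w * (norm (Jac x t z0 *v v))^2 \<le> Im (cquad v A)"
  proof (rule Im_cquad_ge_of_cubic_expansion[OF Jac_has_derivative[OF x t] _ \<epsilon>(1) _ Im0 cubic])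
    show "w * (norm y)^2 \<le> Im (Phi t y z)" if "z \<in> ball z0 (r/2)" "norm y < \<epsilon>" for y z
      using that \<epsilon>(2) r order_trans[of "ereal (norm y)" "ereal \<epsilon>" "2 * eta"]
      by (intro lower) (auto simp: dist_norm)
  qed (use r in auto)
  moreover have "norm v / max Rm1 1 \<le> norm (Jac x t z0 *v v)"
  proof -
    have "norm v \<le> Rm1 * norm (Jac x t z0 *v v)"
      using norm_le_onorm_matrix_inv_mult[OF inv, of v] Rm1 by (meson mult_right_mono norm_ge_zero order_trans)
    also have "\<dots> \<le> max Rm1 1 * norm (Jac x t z0 *v v)"
      by (intro mult_right_mono) auto
    finally show ?thesis by (simp add: divide_le_eq mult.commute)
  qed
  then have "(norm v / max Rm1 1)^2 \<le> (norm (Jac x t z0 *v v))^2"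
    by (intro power_mono) auto
  ultimately show ?thesis
    using mult_left_mono[of _ _ "2 * w"] w by (fastforce simp: Im_cquad power_divide)
qed

lemma compact_Kset: "compact K0 \<Longrightarrow> e > 0 \<Longrightarrow> compact (Kset K0 e)"
  using compact_infdist_le[of K0 e] by (cases "K0 = {}") (auto simp: Kset_def)

theorem lemma6p10:
  fixes x :: "real \<Rightarrow> real^'n \<Rightarrow> real^'n"
    and Phi :: "real \<Rightarrow> real^'n \<Rightarrow> real^'n \<Rightarrow> complex"
    and T d \<delta> r Rm1 :: real and eta :: ereal and K0 :: "(real^'n) set"
  assumes T_pos: "T > 0" and K0: "compact K0" and d_pos: "d > 0" and eta_pos: "eta > 0"
    and P1: "smooth_on ({0..T} \<times> UNIV) (\<lambda>(t, z). x t z)"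
    and P2: "smooth_on ({0..T} \<times> UNIV \<times> UNIV) (\<lambda>(t, y, z). Phi t y z)"
    and P3: "\<exists>C>0. (\<forall>t\<in>{0..T}. \<forall>z\<in>Kset K0 d. \<forall>i. Im (gradY Phi t 0 z $ i) = 0) \<and>
              (\<forall>t\<in>{0..T}. \<forall>z\<in>Kset K0 d. \<forall>z'\<in>Kset K0 d.
                 norm (Re_vec (gradY Phi t 0 z) - Re_vec (gradY Phi t 0 z')) + norm (x t z - x t z')
                   \<ge> C * norm (z - z'))"
    and P4: "\<exists>w4>0. \<forall>t\<in>{0..T}. \<forall>z\<in>Kset K0 d. \<forall>y. ereal (norm y) \<le> 2 * eta \<longrightarrow>
              Im (Phi t y z) \<ge> w4 * (norm y)^2"
    and P6: "\<forall>t\<in>{0..T}. \<forall>z. Im (Phi t 0 z) = 0 \<and> (\<forall>i. Im (gradY Phi t 0 z $ i) = 0) \<and>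
              transpose (Jac x t z) *v Re_vec (gradY Phi t 0 z) = Re_vec (gradZ Phi t 0 z)"
    and delta_pos: "\<delta> > 0"
    and r: "0 < r" "r \<le> d / 2"
    and rR: "\<forall>(t, z0) \<in> ({0..T} \<times> Kset K0 (d/2)) - X_preimage x T K0 d (\<delta>/2).
               cball z0 r \<subseteq> Kset K0 d \<and>
               (\<forall>z\<in>ball z0 r. invertible (Jac x t z) \<and>
                  onorm (\<lambda>v. matrix_inv (Jac x t z) *v v) \<le> Rm1)"
  shows "\<exists>R3::real. \<exists>wa>0. \<exists>A :: real \<Rightarrow> real^'n \<Rightarrow> complex^'n^'n.
           (\<forall>(t, z0) \<in> ({0..T} \<times> Kset K0 (d/2)) - X_preimage x T K0 d (\<delta>/2).
              transpose (Im_mat (A t z0)) = Im_mat (A t z0) \<and>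
              (\<forall>v. v \<bullet> (Im_mat (A t z0) *v v) \<ge> wa * (norm v)^2)) \<and>
           (\<forall>(t, z0) \<in> ({0..T} \<times> Kset K0 (d/2)) - X_preimage x T K0 d (\<delta>/2).
              \<forall>z\<in>ball z0 (r/2).
                cmod (Phi t (x t z0 - x t z) z
                      - (Phi t 0 z0 + (1/2) * cquad (z - z0) (A t z0)))
                  \<le> R3 * (norm (z - z0))^3)"
proof -
  obtain w4 where w4: "w4 > 0"
    and lower: "\<forall>t\<in>{0..T}. \<forall>z\<in>Kset K0 d. \<forall>y. ereal (norm y) \<le> 2 * eta \<longrightarrow> w4 * (norm y)^2 \<le> Im (Phi t y z)"
    using P4 by blast
  define K where "K = {0..T} \<times> Kset K0 (d/2)"
  define A where "A t z0 = sym_form_matrix (phase_deriv2 T x Phi t z0)" for t z0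
  have "compact K" "K \<subseteq> {0..T} \<times> UNIV"
    using K0 d_pos by (auto simp: K_def intro!: compact_Times compact_Kset)
  then obtain M where cubic: "\<And>t z0 z. (t, z0) \<in> K \<Longrightarrow> z \<in> ball z0 (r/2) \<Longrightarrow>
      cmod (Phi t (x t z0 - x t z) z - (Phi t 0 z0 + 1/2 * cquad (z - z0) (A t z0))) \<le> M * (norm (z - z0))^3"
    unfolding A_def by (rule phase_cubic_expansion[OF P1 P2 P6]) blast
  have pos: "2 * w4 / (max Rm1 1)^2 * (norm v)^2 \<le> v \<bullet> (Im_mat (A t z0) *v v)"
    if tz: "(t, z0) \<in> K - X_preimage x T K0 d (\<delta>/2)" for t z0 v
  proof -
    have t: "t \<in> {0..T}" and z0: "z0 \<in> ball z0 r"
      using tz r by (auto simp: K_def)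
    have cb: "cball z0 r \<subseteq> Kset K0 d"
      and inv: "invertible (Jac x t z0)" and Rm1: "onorm (\<lambda>v. matrix_inv (Jac x t z0) *v v) \<le> Rm1"
      using rR tz z0 unfolding K_def by blast+
    show ?thesis
      by (rule Im_mat_ge_of_phase_expansion[where Phi = Phi and R = M, OF P1 t less_imp_le[OF w4] eta_pos r(1) _ _ _ inv Rm1])
        (use lower t cb P6 cubic tz in blast)+
  qed
  have "0 < 2 * w4 / (max Rm1 1)^2"
    using w4 by simp
  with pos cubic show ?thesis
    unfolding K_def[symmetric]
    by (intro exI[of _ M] exI[of _ "2 * w4 / (max Rm1 1)^2"] conjI exI[of _ A])
      (auto simp: A_def symmetric_Im_mat_sym_form_matrix)
qed

end
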